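(* Let $(X,\mathbb{A},d)$ be a forward complete $C^*$-algebra valued asymmetric metric space and let $T:X\to X$ be a forward $C^*$-valued contractive type mapping, i.e. there exist $x\in X$ and $a\in\mathbb{A}$ with $\|a\|<1$ such that $d(Ty,T^2y)\preceq a^*\,d(y,Ty)\,a$ for every $y\in\mathcal{O}_T(x)$. Then: (1) there exists $x_0\in X$ such that the sequence $\{T^nx\}_{n}$ forward converges to $x_0$ with respect to $\mathbb{A}$; (2) $x_0$ is a fixed point of $T$ if and only if the map $G:X\to\mathbb{A}$, $G(z)=d(z,Tz)$, is forward $T$-orbitally lower semicontinuous at $x_0$ with respect to $\mathbb{A}$.
   Context: $\mathbb{A}$ is a unital $C^*$-algebra with unit $I_{\mathbb{A}}$ and zero $0_{\mathbb{A}}$; $\mathbb{A}^+$ denotes its positive elements and, for self-adjoint $a,b$, $a\preceq b$ means $b-a\in\mathbb{A}^+$. $\epsilon\succ 0_{\mathbb{A}}$ means $\epsilon\in\mathbb{A}^+$ is invertible (equivalently $\epsilon\succeq\delta I_{\mathbb{A}}$ for some real $\delta>0$). A $C^*$-algebra valued asymmetric metric on a nonempty set $X$ is a map $d:X\times X\to\mathbb{A}$ such that (i) $0_{\mathbb{A}}\preceq d(x,y)$ for all $x,y$, and $d(x,y)=0_{\mathbb{A}}$ iff $x=y$; (ii) $d(x,y)\preceq d(x,z)+d(z,y)$ for all $x,y,z$ (symmetry not required); $(X,\mathbb{A},d)$ is then a $C^*$-algebra valued asymmetric metric space. A sequence $\{x_n\}$ forward converges to $x$ if for every $\epsilon\succ0_{\mathbb{A}}$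 there is $k$ with $d(x,x_n)\preceq\epsilon$ for all $n\ge k$. $\{x_n\}$ is forward Cauchy if for every $\epsilon\succ0_{\mathbb{A}}$ there is $k$ with $d(x_p,x_n)\preceq\epsilon$ for all $n>p\ge k$. $X$ is forward complete if every forward Cauchy sequence forward converges to some point of $X$. For $x\in X$, the orbit is $\mathcal{O}_T(x)=\{T^nx: n\in\mathbb{N}\}$. A function $G:X\to\mathbb{A}$ is forward $T$-orbitally lower semicontinuous at $x_0$ (with respect to $\mathbb{A}$) if for every sequence $\{x_n\}$ in $\mathcal{O}_T(x)$ that forward converges to $x_0$ one has $\|G(x_0)\|\le\liminf_{n\to\infty}\|G(x_n)\|$. *)

theory Defs
  imports "HOL-Analysis.Analysis"
begin

class cstar_algebra = real_normed_algebra_1 + complete_space +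
  fixes scaleC :: "complex \<Rightarrow> 'a \<Rightarrow> 'a"
    and adj :: "'a \<Rightarrow> 'a"
  assumes scaleC_add_right: "scaleC c (x + y) = scaleC c x + scaleC c y"
    and scaleC_add_left: "scaleC (c1 + c2) x = scaleC c1 x + scaleC c2 x"
    and scaleC_scaleC: "scaleC c1 (scaleC c2 x) = scaleC (c1 * c2) x"
    and scaleC_one: "scaleC 1 x = x"
    and scaleR_scaleC: "scaleR r x = scaleC (complex_of_real r) x"
    and norm_scaleC: "norm (scaleC c x) = cmod c * norm x"
    and scaleC_mult_left: "scaleC c x * y = scaleC c (x * y)"
    and scaleC_mult_right: "x * scaleC c y = scaleC c (x * y)"
    and adj_adj: "adj (adj x) = x"
    and adj_add: "adj (x + y) = adj x + adj y"
    and adj_scaleC: "adj (scaleC c x) = scaleC (cnj c) (adj x)"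
    and adj_mult: "adj (x * y) = adj y * adj x"
    and cstar_identity: "norm (adj x * x) = (norm x)\<^sup>2"

definition cpos :: "'a::cstar_algebra \<Rightarrow> bool" where
  "cpos a \<longleftrightarrow> (\<exists>b. a = adj b * b)"

definition cle :: "'a::cstar_algebra \<Rightarrow> 'a \<Rightarrow> bool" where
  "cle a b \<longleftrightarrow> cpos (b - a)"

definition cinvertible :: "'a::cstar_algebra \<Rightarrow> bool" where
  "cinvertible a \<longleftrightarrow> (\<exists>y. a * y = 1 \<and> y * a = 1)"

definition cgt0 :: "'a::cstar_algebra \<Rightarrow> bool" where
  "cgt0 e \<longleftrightarrow> cpos e \<and> cinvertible e"

definition casym_metric :: "('x \<Rightarrow> 'x \<Rightarrow> 'a::cstar_algebra) \<Rightarrow> bool" where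
  "casym_metric d \<longleftrightarrow>
     (\<forall>x y. cle 0 (d x y)) \<and> (\<forall>x y. d x y = 0 \<longleftrightarrow> x = y) \<and>
     (\<forall>x y z. cle (d x y) (d x z + d z y))"

definition fwd_converges :: "('x \<Rightarrow> 'x \<Rightarrow> 'a::cstar_algebra) \<Rightarrow> (nat \<Rightarrow> 'x) \<Rightarrow> 'x \<Rightarrow> bool" where
  "fwd_converges d xs x \<longleftrightarrow>
     (\<forall>e. cgt0 e \<longrightarrow> (\<exists>k. \<forall>n\<ge>k. cle (d x (xs n)) e))"

definition fwd_cauchy :: "('x \<Rightarrow> 'x \<Rightarrow> 'a::cstar_algebra) \<Rightarrow> (nat \<Rightarrow> 'x) \<Rightarrow> bool" where
  "fwd_cauchy d xs \<longleftrightarrow>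
     (\<forall>e. cgt0 e \<longrightarrow> (\<exists>k. \<forall>n p. k \<le> p \<and> p < n \<longrightarrow> cle (d (xs p) (xs n)) e))"

definition fwd_complete :: "('x \<Rightarrow> 'x \<Rightarrow> 'a::cstar_algebra) \<Rightarrow> bool" where
  "fwd_complete d \<longleftrightarrow> (\<forall>xs. fwd_cauchy d xs \<longrightarrow> (\<exists>x. fwd_converges d xs x))"

definition orbit :: "('x \<Rightarrow> 'x) \<Rightarrow> 'x \<Rightarrow> 'x set" where
  "orbit T x = {(T ^^ n) x | n. True}"

definition fwd_orbital_lsc ::
  "('x \<Rightarrow> 'x \<Rightarrow> 'a::cstar_algebra) \<Rightarrow> ('x \<Rightarrow> 'x) \<Rightarrow> 'x \<Rightarrow> ('x \<Rightarrow> 'a) \<Rightarrow> 'x \<Rightarrow> bool" where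
  "fwd_orbital_lsc d T x G x0 \<longleftrightarrow>
     (\<forall>xs. (\<forall>n. xs n \<in> orbit T x) \<longrightarrow> fwd_converges d xs x0 \<longrightarrow>
        ereal (norm (G x0)) \<le> liminf (\<lambda>n. ereal (norm (G (xs n)))))"

end

(*
  Write D n = d (T^n x) (T^(n+1) x). The contraction hypothesis and the congruence
  a <= b ==> adj c * a * c <= adj c * b * c give D n <= adj (a^n) * D 0 * a^n, an
  element of norm at most \<parallel>D 0\<parallel> \<parallel>a\<parallel>^(2n). Summing along the orbit with the triangle
  inequality bounds d (T^p x) (T^n x) by an element of norm O(\<parallel>a\<parallel>^(2p)), hence below
  any invertible positive \<epsilon>, which dominates a positive multiple of the unit: the orbit
  is forward Cauchy and converges to some x0. Since \<parallel>D n\<parallel> tends to 0, lower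
  semicontinuity of G z = d z (T z) along the orbit forces G x0 = 0, i.e. T x0 = x0;
  conversely G x0 = 0 makes the semicontinuity inequality trivial.

  The order-theoretic facts this needs (transitivity and additivity of the order,
  0 <= u <= l 1 ==> \<parallel>u\<parallel> <= l, and the bound for \<epsilon>) are derived from the C*-axioms:
  the cone of elements b* b is identified with the self-adjoint h satisfying
  \<parallel>t 1 - h\<parallel> <= t for some t >= 0. Square roots come from the binomial series of
  sqrt (1 - t), and the hard inclusion, that b* b lies in this cone, is the classical
  argument through the negative part of b* b.
*)
theory Submission
  imports Defs
begin

section \<open>The binomial series of the square root\<close>

text \<open>Taylor coefficients of \<open>sqrt (1 - t) = (\<Sum>j. sqrt_coeff j * t ^ j)\<close>.\<close>

definition sqrt_coeff :: "nat \<Rightarrow> real" where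
  "sqrt_coeff j = (-1) ^ j * ((1/2) gchoose j)"

definition sqrt_coeff_psum :: "nat \<Rightarrow> real" where
  "sqrt_coeff_psum n = (real n - 1/2) gchoose n"

lemma sum_sqrt_coeff: "(\<Sum>j\<le>n. sqrt_coeff j) = sqrt_coeff_psum n"
proof -
  have "(\<Sum>j\<le>n. sqrt_coeff j) = (\<Sum>j\<le>n. ((1/2::real) gchoose j) * (-1) ^ j)"
    by (simp add: sqrt_coeff_def mult.commute)
  also have "\<dots> = (-1) ^ n * ((1/2 - 1::real) gchoose n)"
    by (rule gbinomial_sum_lower_neg)
  also have "((1/2 - 1::real) gchoose n) = (-1) ^ n * ((real n - 1/2) gchoose n)"
    using gbinomial_negated_upper[of "1/2 - 1::real" n] by simp
  finally show ?thesis
    by (simp add: sqrt_coeff_psum_def flip: power_mult_distrib)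
qed

lemma sqrt_coeff_psum_0: "sqrt_coeff_psum 0 = 1"
  by (simp add: sqrt_coeff_psum_def)

lemma sqrt_coeff_psum_Suc:
  "sqrt_coeff_psum (Suc n) = sqrt_coeff_psum n * ((real n + 1/2) / real (Suc n))"
proof -
  have "sqrt_coeff_psum (Suc n) = ((real n - 1/2) + 1) gchoose Suc n"
    by (simp add: sqrt_coeff_psum_def algebra_simps)
  also have "\<dots> = ((real n - 1/2) gchoose n) * (((real n - 1/2) + 1) / of_nat (Suc n))"
    by (rule gbinomial_rec)
  finally show ?thesis
    by (simp add: sqrt_coeff_psum_def algebra_simps)
qed

lemma sqrt_coeff_psum_nonneg: "0 \<le> sqrt_coeff_psum n"
  by (induction n) (auto simp: sqrt_coeff_psum_0 sqrt_coeff_psum_Suc)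

lemma sqrt_coeff_psum_Suc_le: "sqrt_coeff_psum (Suc n) \<le> sqrt_coeff_psum n"
proof -
  have "(real n + 1/2) / real (Suc n) \<le> 1"
    by (simp add: field_simps)
  from mult_left_mono[OF this sqrt_coeff_psum_nonneg] show ?thesis
    by (simp add: sqrt_coeff_psum_Suc)
qed

lemma sqrt_coeff_0: "sqrt_coeff 0 = 1"
  by (simp add: sqrt_coeff_def)

lemma sqrt_coeff_Suc: "sqrt_coeff (Suc n) = sqrt_coeff_psum (Suc n) - sqrt_coeff_psum n"
proof -
  have "sqrt_coeff_psum (Suc n) = sqrt_coeff_psum n + sqrt_coeff (Suc n)"
    by (simp only: sum_sqrt_coeff[symmetric] sum.atMost_Suc)
  then show ?thesis
    by linarith
qed

lemma sqrt_coeff_Suc_nonpos: "sqrt_coeff (Suc n) \<le> 0"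
  using sqrt_coeff_psum_Suc_le[of n] by (simp add: sqrt_coeff_Suc)

lemma sum_neg_sqrt_coeff_Suc: "(\<Sum>j<n. - sqrt_coeff (Suc j)) = 1 - sqrt_coeff_psum n"
  by (induction n) (simp_all add: sqrt_coeff_Suc sqrt_coeff_psum_0)

lemma summable_neg_sqrt_coeff_Suc: "summable (\<lambda>j. - sqrt_coeff (Suc j))"
  by (rule summableI_nonneg_bounded[where x = 1])
     (use sqrt_coeff_Suc_nonpos sum_neg_sqrt_coeff_Suc sqrt_coeff_psum_nonneg in auto)

lemma suminf_neg_sqrt_coeff_Suc_le_1: "(\<Sum>j. - sqrt_coeff (Suc j)) \<le> 1"
  by (rule suminf_le_const[OF summable_neg_sqrt_coeff_Suc])
     (use sum_neg_sqrt_coeff_Suc sqrt_coeff_psum_nonneg in auto)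

lemma summable_abs_sqrt_coeff: "summable (\<lambda>j. \<bar>sqrt_coeff j\<bar>)"
proof -
  have "(\<lambda>j. \<bar>sqrt_coeff (Suc j)\<bar>) = (\<lambda>j. - sqrt_coeff (Suc j))"
    using sqrt_coeff_Suc_nonpos by (auto simp: abs_of_nonpos)
  then show ?thesis
    using summable_neg_sqrt_coeff_Suc by (subst summable_Suc_iff[symmetric]) simp
qed

text \<open>The Cauchy square of the series is \<open>1 - t\<close>, by Vandermonde's identity.\<close>

lemma sqrt_coeff_convolution:
  "(\<Sum>i\<le>n. sqrt_coeff i * sqrt_coeff (n - i)) = (if n = 0 then 1 else if n = 1 then -1 else 0)"
proof -
  have "(\<Sum>i\<le>n. sqrt_coeff i * sqrt_coeff (n - i))
      = (\<Sum>i\<le>n. (-1) ^ n * (((1/2::real) gchoose i) * ((1/2) gchoose (n - i))))"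
    by (intro sum.cong) (auto simp: sqrt_coeff_def power_add[symmetric])
  also have "\<dots> = (-1) ^ n * (\<Sum>i=0..n. ((1/2::real) gchoose i) * ((1/2) gchoose (n - i)))"
    by (simp add: sum_distrib_left atMost_atLeast0)
  also have "\<dots> = (-1) ^ n * ((1/2 + 1/2::real) gchoose n)"
    by (simp only: gbinomial_Vandermonde)
  also have "((1/2 + 1/2::real) gchoose n) = of_nat (1 choose n)"
    using binomial_gbinomial[of 1 n, where 'a = real] by simp
  finally show ?thesis
    by (cases n) (auto simp: binomial_eq_0)
qed

context cstar_algebra
begin

subclass banach ..

end

lemma adj_zero [simp]: "adj 0 = (0::'a::cstar_algebra)"
  using adj_add[of "0::'a" 0] by simp

lemma adj_minus [simp]: "adj (- x) = - adj (x::'a::cstar_algebra)"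
  using minus_unique[of "adj x" "adj (- x)"] adj_add[of x "- x"] by simp

lemma adj_diff [simp]: "adj (x - y) = adj x - adj (y::'a::cstar_algebra)"
  using adj_add[of x "- y"] by simp

lemma adj_one [simp]: "adj 1 = (1::'a::cstar_algebra)"
  using adj_mult[of "adj 1" "1::'a"] by (simp add: adj_adj)

lemma adj_scaleR [simp]: "adj (r *\<^sub>R x) = r *\<^sub>R adj (x::'a::cstar_algebra)"
  by (simp add: scaleR_scaleC adj_scaleC)

lemma adj_of_real [simp]: "adj (of_real r) = (of_real r :: 'a::cstar_algebra)"
  by (simp add: of_real_def)

lemma adj_power: "adj (x ^ n) = adj x ^ n" for x :: "'a::cstar_algebra"
  by (induction n) (simp_all add: adj_mult power_commutes)

lemma adj_sum: "adj (sum f A) = (\<Sum>i\<in>A. adj (f i))" for f :: "_ \<Rightarrow> 'a::cstar_algebra"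
  by (induction A rule: infinite_finite_induct) (simp_all add: adj_add)

lemma norm_adj [simp]: "norm (adj x) = norm (x::'a::cstar_algebra)"
proof -
  have le: "norm y \<le> norm (adj y)" for y :: 'a
  proof (cases "y = 0")
    case False
    have "(norm y)\<^sup>2 = norm (adj y * y)"
      by (simp add: cstar_identity)
    also have "\<dots> \<le> norm (adj y) * norm y"
      by (rule norm_mult_ineq)
    finally show ?thesis
      using False by (simp add: power2_eq_square)
  qed simp
  show ?thesis
    using le[of x] le[of "adj x"] by (simp add: adj_adj)
qed

lemma bounded_linear_adj: "bounded_linear (adj :: 'a::cstar_algebra \<Rightarrow> 'a)"
  by (rule bounded_linear_intro[where K = 1]) (simp_all add: adj_add)

lemma adj_suminf: "summable f \<Longrightarrow> adj (suminf f) = (\<Sum>n. adj (f n))"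
  for f :: "nat \<Rightarrow> 'a::cstar_algebra"
  by (rule bounded_linear.suminf[OF bounded_linear_adj])

lemma norm_mult_self_sa: "adj h = h \<Longrightarrow> norm (h * h) = (norm h)\<^sup>2"
  for h :: "'a::cstar_algebra"
  using cstar_identity[of h] by simp

lemma one_neq_zero_cstar: "(1::'a::cstar_algebra) \<noteq> 0"
  using norm_one[where 'a = 'a] by auto

lemma commute_inverse:
  fixes z y m :: "'a::monoid_mult"
  assumes "z * y = y * z" "y * m = 1" "m * y = 1"
  shows "z * m = m * z"
  by (metis assms mult.assoc mult_1_left mult_1_right)

lemma adj_inverse:
  fixes y m :: "'a::cstar_algebra"
  assumes "adj y = y" "y * m = 1" "m * y = 1"
  shows "adj m = m"
proof -
  have "adj m * y = 1"
    using adj_mult[of y m] assms by simp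
  then show ?thesis
    by (metis assms(2) mult.assoc mult_1_left mult_1_right)
qed

section \<open>Neumann series and square roots\<close>

lemma neumann_series_inverse:
  fixes y :: "'a::cstar_algebra"
  assumes "norm y < 1"
  obtains v where "(1 - y) * v = 1" "v * (1 - y) = 1" "norm v \<le> 1 / (1 - norm y)"
proof -
  have sg: "summable (\<lambda>n. norm y ^ n)"
    using assms by (simp add: summable_geometric)
  have sn: "summable (\<lambda>n. norm (y ^ n))"
    by (rule summable_comparison_test[OF _ sg]) (use norm_power_ineq in auto)
  then have s: "summable (\<lambda>n. y ^ n)"
    by (rule summable_norm_cancel)
  define v where "v = (\<Sum>n. y ^ n)"
  have tel: "(\<lambda>n. y ^ n - y ^ Suc n) sums 1"
    using sums_minus[OF telescope_sums[OF summable_LIMSEQ_zero[OF s]]] by simp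
  have "(\<lambda>n. (1 - y) * y ^ n) sums ((1 - y) * v)"
    unfolding v_def by (rule sums_mult[OF summable_sums[OF s]])
  moreover have "(\<lambda>n. (1 - y) * y ^ n) = (\<lambda>n. y ^ n - y ^ Suc n)"
    by (simp add: algebra_simps)
  ultimately have left: "(1 - y) * v = 1"
    using tel sums_unique2 by fastforce
  have "(\<lambda>n. y ^ n * (1 - y)) sums (v * (1 - y))"
    unfolding v_def by (rule sums_mult2[OF summable_sums[OF s]])
  moreover have "(\<lambda>n. y ^ n * (1 - y)) = (\<lambda>n. y ^ n - y ^ Suc n)"
    by (simp add: algebra_simps power_commutes)
  ultimately have right: "v * (1 - y) = 1"
    using tel sums_unique2 by fastforce
  have "norm v \<le> (\<Sum>n. norm (y ^ n))"
    unfolding v_def by (rule summable_norm[OF sn])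
  also have "\<dots> \<le> (\<Sum>n. norm y ^ n)"
    by (rule suminf_le[OF norm_power_ineq sn sg])
  also have "\<dots> = 1 / (1 - norm y)"
    using assms by (simp add: suminf_geometric)
  finally show ?thesis
    using that left right by blast
qed

definition sqrt_series :: "'a::cstar_algebra \<Rightarrow> 'a" where
  "sqrt_series k = (\<Sum>j. sqrt_coeff j *\<^sub>R k ^ j)"

lemma summable_norm_sqrt_series:
  fixes k :: "'a::cstar_algebra"
  assumes "norm k \<le> 1"
  shows "summable (\<lambda>j. norm (sqrt_coeff j *\<^sub>R k ^ j))"
    and "\<And>j. norm (sqrt_coeff j *\<^sub>R k ^ j) \<le> \<bar>sqrt_coeff j\<bar>"
proof -
  show bound: "norm (sqrt_coeff j *\<^sub>R k ^ j) \<le> \<bar>sqrt_coeff j\<bar>" for j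
  proof -
    have "norm (k ^ j) \<le> 1"
      using norm_power_ineq[of k j] power_le_one[OF norm_ge_zero assms, of j] by linarith
    then show ?thesis
      by (simp add: mult_left_le)
  qed
  show "summable (\<lambda>j. norm (sqrt_coeff j *\<^sub>R k ^ j))"
    by (rule summable_comparison_test'[OF summable_abs_sqrt_coeff]) (use bound in simp)
qed

lemma summable_sqrt_series: "norm k \<le> 1 \<Longrightarrow> summable (\<lambda>j. sqrt_coeff j *\<^sub>R k ^ j)"
  for k :: "'a::cstar_algebra"
  using summable_norm_sqrt_series(1) by (rule summable_norm_cancel)

lemma adj_sqrt_series: "adj k = k \<Longrightarrow> norm k \<le> 1 \<Longrightarrow> adj (sqrt_series k) = sqrt_series k"
  for k :: "'a::cstar_algebra"
  by (simp add: sqrt_series_def adj_suminf[OF summable_sqrt_series] adj_power)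

lemma sqrt_series_mult_self:
  fixes k :: "'a::cstar_algebra"
  assumes "norm k \<le> 1"
  shows "sqrt_series k * sqrt_series k = 1 - k"
proof -
  define c where "c j = sqrt_coeff j *\<^sub>R k ^ j" for j
  have c_mult: "c i * c (n - i) = (sqrt_coeff i * sqrt_coeff (n - i)) *\<^sub>R k ^ n"
    if "i \<le> n" for i n
    using that by (simp add: c_def power_add[symmetric])
  have snc: "summable (\<lambda>j. norm (c j))"
    unfolding c_def by (rule summable_norm_sqrt_series(1)[OF assms])
  have "sqrt_series k * sqrt_series k = (\<Sum>n. \<Sum>i\<le>n. c i * c (n - i))"
    unfolding sqrt_series_def c_def[symmetric] by (rule Cauchy_product[OF snc snc])
  also have "\<dots> = (\<Sum>n. (\<Sum>i\<le>n. sqrt_coeff i * sqrt_coeff (n - i)) *\<^sub>R k ^ n)"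
    by (simp add: c_mult scaleR_sum_left)
  also have "\<dots> = (\<Sum>n. (if n = 0 then 1 else if n = 1 then -1 else 0) *\<^sub>R k ^ n)"
    by (simp only: sqrt_coeff_convolution)
  also have "\<dots> = (\<Sum>n\<in>{0,1}. (if n = 0 then 1 else if n = 1 then -1 else 0) *\<^sub>R k ^ n)"
    by (rule suminf_finite) auto
  also have "\<dots> = 1 - k"
    by simp
  finally show ?thesis .
qed

lemma norm_one_minus_sqrt_series_le:
  fixes k :: "'a::cstar_algebra"
  assumes "norm k \<le> 1"
  shows "norm (1 - sqrt_series k) \<le> 1"
proof -
  let ?c = "\<lambda>j. sqrt_coeff j *\<^sub>R k ^ j"
  have snc: "summable (\<lambda>j. norm (?c (Suc j)))"
    using summable_norm_sqrt_series(1)[OF assms] by (subst summable_Suc_iff)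
  have "1 - sqrt_series k = - (\<Sum>j. ?c (Suc j))"
    using suminf_split_head[OF summable_sqrt_series[OF assms]]
    by (simp add: sqrt_series_def sqrt_coeff_0)
  then have "norm (1 - sqrt_series k) \<le> (\<Sum>j. norm (?c (Suc j)))"
    using summable_norm[OF snc] by simp
  also have "\<dots> \<le> (\<Sum>j. - sqrt_coeff (Suc j))"
  proof (rule suminf_le[OF _ snc summable_neg_sqrt_coeff_Suc])
    show "norm (?c (Suc j)) \<le> - sqrt_coeff (Suc j)" for j
      using summable_norm_sqrt_series(2)[OF assms, of "Suc j"] sqrt_coeff_Suc_nonpos[of j] by simp
  qed
  also have "\<dots> \<le> 1"
    by (rule suminf_neg_sqrt_coeff_Suc_le_1)
  finally show ?thesis .
qed

lemma sqrt_series_commute: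
  fixes k z :: "'a::cstar_algebra"
  assumes "norm k \<le> 1" "z * k = k * z"
  shows "z * sqrt_series k = sqrt_series k * z"
proof -
  note s = summable_sqrt_series[OF assms(1)]
  have "z * sqrt_series k = (\<Sum>j. z * (sqrt_coeff j *\<^sub>R k ^ j))"
    unfolding sqrt_series_def by (rule suminf_mult[OF s, symmetric])
  also have "\<dots> = (\<Sum>j. (sqrt_coeff j *\<^sub>R k ^ j) * z)"
    using power_commuting_commutes[OF assms(2)[symmetric]] by simp
  also have "\<dots> = sqrt_series k * z"
    unfolding sqrt_series_def by (rule suminf_mult2[OF s, symmetric])
  finally show ?thesis .
qed

lemma sqrt_one_minus_sa:
  fixes k :: "'a::cstar_algebra"
  assumes "adj k = k" "norm k \<le> 1"
  obtains s where "adj s = s" "s * s = 1 - k" "norm (1 - s) \<le> 1"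
    "\<And>z. z * k = k * z \<Longrightarrow> z * s = s * z"
  using that[OF adj_sqrt_series[OF assms] sqrt_series_mult_self[OF assms(2)]
      norm_one_minus_sqrt_series_le[OF assms(2)] sqrt_series_commute[OF assms(2)]] .

definition times_i :: "'a::cstar_algebra \<Rightarrow> 'a" where
  "times_i x = scaleC \<i> x"

lemma scaleC_minus_one: "scaleC (-1) x = - (x::'a::cstar_algebra)"
  using scaleR_scaleC[of "-1" x] by simp

lemma times_i_times_i [simp]: "times_i (times_i x) = - x"
  by (simp add: times_i_def scaleC_scaleC scaleC_minus_one)

lemma times_i_add: "times_i (x + y) = times_i x + times_i y"
  by (simp add: times_i_def scaleC_add_right)

lemma times_i_diff: "times_i (x - y) = times_i x - times_i y"
  using times_i_add[of "x - y" y] by (simp add: algebra_simps)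

lemma times_i_mult_left: "times_i x * y = times_i (x * y)"
  by (simp add: times_i_def scaleC_mult_left)

lemma times_i_mult_right: "x * times_i y = times_i (x * y)"
  by (simp add: times_i_def scaleC_mult_right)

lemma adj_times_i: "adj (times_i x) = - times_i (adj x)"
proof -
  have "adj (times_i x) = scaleC (- \<i>) (adj x)"
    by (simp add: times_i_def adj_scaleC)
  also have "\<dots> = - times_i (adj x)"
    using scaleC_scaleC[of "-1" \<i> "adj x"] by (simp add: times_i_def scaleC_minus_one)
  finally show ?thesis .
qed

lemma adj_mult_self_commuting_sum:
  fixes w v :: "'a::cstar_algebra"
  assumes "adj w = w" "adj v = v" "w * v = v * w"
  shows "adj (w + times_i v) * (w + times_i v) = w * w + v * v"
proof -
  have "adj (w + times_i v) * (w + times_i v) = (w - times_i v) * (w + times_i v)"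
    using assms by (simp add: adj_add adj_times_i)
  also have "\<dots> = w * w + w * times_i v - times_i v * w - times_i v * times_i v"
    by (simp add: algebra_simps)
  also have "\<dots> = w * w + times_i (w * v) - times_i (v * w) - times_i (times_i (v * v))"
    by (simp only: times_i_mult_left times_i_mult_right)
  also have "\<dots> = w * w + v * v"
    using assms(3) by simp
  finally show ?thesis .
qed

lemma square_add_adj_square_sa_sum:
  fixes w v :: "'a::cstar_algebra"
  assumes "adj w = w" "adj v = v"
  shows "(w + times_i v) * (w + times_i v) + adj (w + times_i v) * adj (w + times_i v)
    = 2 *\<^sub>R (w * w - v * v)"
proof -
  have "times_i v * times_i v = - (v * v)"
    by (simp add: times_i_mult_left times_i_mult_right)
  then show ?thesis
    using assms by (simp add: adj_add adj_times_i algebra_simps scaleR_2)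
qed

section \<open>The cone of elements with nonnegative spectrum\<close>

text \<open>Self-adjoint with spectrum in \<open>[0, 2 t]\<close> for some \<open>t \<ge> 0\<close>, phrased without
  spectral theory; this cone turns out to be exactly \<^const>\<open>cpos\<close>.\<close>

definition spec_nonneg :: "'a::cstar_algebra \<Rightarrow> bool" where
  "spec_nonneg h \<longleftrightarrow> adj h = h \<and> (\<exists>t\<ge>0. norm (of_real t - h) \<le> t)"

lemma spec_nonneg_sa: "spec_nonneg h \<Longrightarrow> adj h = h"
  by (simp add: spec_nonneg_def)

lemma spec_nonneg_0: "spec_nonneg 0"
  by (auto simp: spec_nonneg_def)

lemma spec_nonneg_of_real: "t \<ge> 0 \<Longrightarrow> spec_nonneg (of_real t :: 'a::cstar_algebra)"
  by (auto simp: spec_nonneg_def)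

lemma spec_nonneg_add:
  assumes "spec_nonneg a" "spec_nonneg b"
  shows "spec_nonneg (a + b)"
proof -
  obtain s t where st: "s \<ge> 0" "norm (of_real s - a) \<le> s" "t \<ge> 0" "norm (of_real t - b) \<le> t"
    using assms by (auto simp: spec_nonneg_def)
  have eq: "of_real (s + t) - (a + b) = (of_real s - a) + (of_real t - b)"
    by (simp add: algebra_simps)
  have "norm (of_real (s + t) - (a + b)) \<le> s + t"
    unfolding eq using norm_triangle_ineq[of "of_real s - a" "of_real t - b"] st by linarith
  then show ?thesis
    using assms st by (auto simp: spec_nonneg_def adj_add intro!: exI[of _ "s + t"])
qed

lemma spec_nonneg_scaleR:
  assumes "spec_nonneg a" "c \<ge> 0"
  shows "spec_nonneg (c *\<^sub>R a)"
proof -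
  obtain t where "t \<ge> 0" "norm (of_real t - a) \<le> t"
    using assms by (auto simp: spec_nonneg_def)
  moreover have "of_real (c * t) - c *\<^sub>R a = c *\<^sub>R (of_real t - a)"
    by (simp add: scaleR_diff_right of_real_def)
  ultimately have "norm (of_real (c * t) - c *\<^sub>R a) \<le> c * t"
    using assms(2) by (simp add: mult_left_mono)
  then show ?thesis
    using assms \<open>t \<ge> 0\<close> by (auto simp: spec_nonneg_def intro!: exI[of _ "c * t"])
qed

lemma sqrt_spec_nonneg:
  fixes y :: "'a::cstar_algebra"
  assumes "spec_nonneg y"
  obtains w where "spec_nonneg w" "w * w = y" "\<And>z. z * y = y * z \<Longrightarrow> z * w = w * z"
proof (cases "y = 0")
  case True
  then show ?thesis
    using that spec_nonneg_0 by fastforce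
next
  case False
  obtain t where t: "t \<ge> 0" "norm (of_real t - y) \<le> t" and sa: "adj y = y"
    using assms by (auto simp: spec_nonneg_def)
  with False have tp: "t > 0"
    by (cases "t = 0") auto
  define k where "k = (1 / t) *\<^sub>R (of_real t - y)"
  have "adj k = k" "norm k \<le> 1"
    using t tp by (simp_all add: k_def sa divide_le_eq)
  then obtain s where s: "adj s = s" "s * s = 1 - k" "norm (1 - s) \<le> 1"
    "\<And>z. z * k = k * z \<Longrightarrow> z * s = s * z"
    using sqrt_one_minus_sa by blast
  define w where "w = sqrt t *\<^sub>R s"
  have "w * w = t *\<^sub>R (1 - k)"
    using t by (simp add: w_def s(2))
  also have "\<dots> = y"
    using tp by (simp add: k_def scaleR_diff_right of_real_def)
  finally have ww: "w * w = y" .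
  have "of_real (sqrt t) - w = sqrt t *\<^sub>R (1 - s)"
    by (simp add: w_def scaleR_diff_right of_real_def)
  then have "norm (of_real (sqrt t) - w) \<le> sqrt t"
    using s(3) t by (simp add: mult_left_le)
  then have "spec_nonneg w"
    using s(1) t(1) by (auto simp: spec_nonneg_def w_def intro!: exI[of _ "sqrt t"])
  moreover have "z * w = w * z" if "z * y = y * z" for z
  proof -
    have "z * k = k * z"
      using that by (simp add: k_def algebra_simps of_real_def)
    then show ?thesis
      using s(4) by (simp add: w_def)
  qed
  ultimately show ?thesis
    using that ww by blast
qed

lemma sa_obtains_sqrt_one_minus_square:
  fixes g :: "'a::cstar_algebra"
  assumes sa: "adj g = g" and ng: "norm g \<le> 1"
  obtains w where "adj w = w" "w * g = g * w" "w * w = 1 - g * g"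
proof -
  obtain s where s: "adj s = s" "s * s = 1 - g" "\<And>z. z * g = g * z \<Longrightarrow> z * s = s * z"
    using sqrt_one_minus_sa[OF sa ng] by blast
  have "adj (- g) = - g" "norm (- g) \<le> 1"
    using sa ng by simp_all
  then obtain r where r: "adj r = r" "r * r = 1 + g" "\<And>z. z * - g = - g * z \<Longrightarrow> z * r = r * z"
    using sqrt_one_minus_sa[of "- g"] by (metis diff_minus_eq_add)
  have sg: "s * g = g * s" and rg: "r * g = g * r"
    using s(3)[of g] r(3)[of g] by simp_all
  have sr: "s * r = r * s"
    using r(3)[of s] sg by simp
  have "adj (s * r) = s * r"
    using s(1) r(1) sr by (simp add: adj_mult)
  moreover have "(s * r) * g = g * (s * r)"
    by (metis mult.assoc sg rg)
  moreover have "(s * r) * (s * r) = 1 - g * g"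
  proof -
    have "(s * r) * (s * r) = (s * s) * (r * r)"
      by (metis mult.assoc sr)
    then show ?thesis
      using s(2) r(2) by (simp add: algebra_simps)
  qed
  ultimately show ?thesis
    using that by blast
qed

text \<open>With \<open>w = sqrt (1 - g\<^sup>2)\<close>, the element \<open>u = g + i w\<close> is unitary and
  \<open>4 (1 - g\<^sup>2) = 2 - u\<^sup>2 - u*\<^sup>2\<close>.\<close>

lemma norm_one_minus_square_le:
  fixes g :: "'a::cstar_algebra"
  assumes sa: "adj g = g" and ng: "norm g \<le> 1"
  shows "norm (1 - g * g) \<le> 1"
proof -
  obtain w where w_sa: "adj w = w" and wg: "w * g = g * w" and ww: "w * w = 1 - g * g"
    using sa_obtains_sqrt_one_minus_square[OF sa ng] .
  define u where "u = g + times_i w"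
  have "adj u * u = 1"
    using adj_mult_self_commuting_sum[OF sa w_sa wg[symmetric]] ww by (simp add: u_def)
  then have nu: "norm u = 1"
    using cstar_identity[of u] norm_ge_zero[of u] by (simp add: power2_eq_1_iff)
  have "g * g - w * w = 1 - 2 *\<^sub>R (1 - g * g)"
    using ww by (simp add: algebra_simps scaleR_2)
  then have uu: "u * u + adj u * adj u = 2 *\<^sub>R 1 - 4 *\<^sub>R (1 - g * g)"
    unfolding u_def square_add_adj_square_sa_sum[OF sa w_sa] by (simp add: scaleR_diff_right)
  have "4 *\<^sub>R (1 - g * g) = 2 *\<^sub>R 1 - (u * u + adj u * adj u)"
    unfolding uu by simp
  moreover have "norm (u * u + adj u * adj u) \<le> 2"
    using norm_triangle_ineq[of "u * u" "adj u * adj u"]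
      norm_mult_ineq[of u u] norm_mult_ineq[of "adj u" "adj u"] nu by simp
  ultimately have "norm (4 *\<^sub>R (1 - g * g)) \<le> 4"
    using norm_triangle_ineq4[of "2 *\<^sub>R 1 :: 'a" "u * u + adj u * adj u"] by simp
  then show ?thesis
    by simp
qed

lemma norm_of_real_minus_square_le:
  fixes h :: "'a::cstar_algebra"
  assumes sa: "adj h = h"
  shows "norm (of_real ((norm h)\<^sup>2) - h * h) \<le> (norm h)\<^sup>2"
proof (cases "h = 0")
  case False
  define g where "g = (1 / norm h) *\<^sub>R h"
  have "norm (1 - g * g) \<le> 1"
    using sa False by (intro norm_one_minus_square_le) (simp_all add: g_def)
  moreover have "of_real ((norm h)\<^sup>2) - h * h = (norm h)\<^sup>2 *\<^sub>R (1 - g * g)"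
    using False by (simp add: g_def scaleR_diff_right of_real_def power2_eq_square)
  ultimately show ?thesis
    by (simp add: mult_left_le)
qed simp

lemma spec_nonneg_mult_self: "adj h = h \<Longrightarrow> spec_nonneg (h * h)"
  using norm_of_real_minus_square_le[of h]
  by (auto simp: spec_nonneg_def adj_mult intro!: exI[of _ "(norm h)\<^sup>2"])

lemma spec_nonneg_iff:
  "spec_nonneg y \<longleftrightarrow> adj y = y \<and> norm (of_real (norm y) - y) \<le> norm y"
proof
  assume "spec_nonneg y"
  then obtain w where w: "spec_nonneg w" "w * w = y"
    by (rule sqrt_spec_nonneg)
  then have "norm y = (norm w)\<^sup>2"
    using norm_mult_self_sa[OF spec_nonneg_sa] by blast
  then show "adj y = y \<and> norm (of_real (norm y) - y) \<le> norm y"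
    using norm_of_real_minus_square_le[OF spec_nonneg_sa[OF w(1)]] w spec_nonneg_sa[OF w(1)]
    by (auto simp: adj_mult)
next
  assume "adj y = y \<and> norm (of_real (norm y) - y) \<le> norm y"
  then show "spec_nonneg y"
    unfolding spec_nonneg_def using norm_ge_zero[of y] by blast
qed

lemma spec_nonneg_plus_inverse:
  fixes y :: "'a::cstar_algebra"
  assumes "spec_nonneg y" "l > 0"
  obtains m where "(y + of_real l) * m = 1" "m * (y + of_real l) = 1" "norm m \<le> 1 / l"
proof -
  obtain t where t: "t \<ge> 0" "norm (of_real t - y) \<le> t"
    using assms(1) by (auto simp: spec_nonneg_def)
  define q where "q = (1 / (t + l)) *\<^sub>R (of_real t - y)"
  have tl: "t + l > 0"
    using t assms(2) by simp
  have nq: "norm q \<le> t / (t + l)"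
    using t tl by (simp add: q_def divide_right_mono)
  also have "\<dots> < 1"
    using assms(2) tl by simp
  finally have nq1: "norm q < 1" .
  then obtain v where v: "(1 - q) * v = 1" "v * (1 - q) = 1" "norm v \<le> 1 / (1 - norm q)"
    by (rule neumann_series_inverse)
  have "(t + l) *\<^sub>R q = of_real t - y"
    using tl by (simp add: q_def)
  then have "(t + l) *\<^sub>R (1 - q) = (t + l) *\<^sub>R 1 - (of_real t - y)"
    by (simp only: scaleR_diff_right)
  then have yl: "y + of_real l = (t + l) *\<^sub>R (1 - q)"
    by (simp add: of_real_def scaleR_add_left)
  define m where "m = (1 / (t + l)) *\<^sub>R v"
  have "(y + of_real l) * m = 1" "m * (y + of_real l) = 1"
    using v(1,2) tl by (simp_all add: yl m_def)
  moreover have "norm m \<le> 1 / l"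
  proof -
    have "l / (t + l) \<le> 1 - norm q"
      using nq tl by (simp add: field_simps)
    then have "1 / (1 - norm q) \<le> 1 / (l / (t + l))"
      using assms(2) tl nq1 by (intro divide_left_mono) simp_all
    then have "norm v \<le> (t + l) / l"
      using v(3) by simp
    then have "norm v / (t + l) \<le> ((t + l) / l) / (t + l)"
      by (rule divide_right_mono) (use tl in simp)
    also have "\<dots> = 1 / l"
      using tl by simp
    finally show ?thesis
      using tl by (simp add: m_def)
  qed
  ultimately show ?thesis
    using that by blast
qed

lemma spec_nonneg_inverse_gap:
  fixes y :: "'a::cstar_algebra"
  assumes y: "spec_nonneg y" and m: "y * m = 1" "m * y = 1"
  shows "m \<noteq> 0" "spec_nonneg (y - of_real (1 / norm m))"
proof -
  show m0: "m \<noteq> 0"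
    using m one_neq_zero_cstar by force
  obtain g where g: "spec_nonneg g" "g * g = y" "\<And>z. z * y = y * z \<Longrightarrow> z * g = g * z"
    using sqrt_spec_nonneg[OF y] by blast
  have gm: "m * g = g * m"
    using g(3)[of m] m by simp
  have m_sa: "adj m = m"
    using adj_inverse[OF spec_nonneg_sa[OF y] m] .
  define k where "k = (1 / norm m) *\<^sub>R m"
  have "adj k = k" "norm k \<le> 1"
    using m0 by (simp_all add: k_def m_sa)
  then obtain r where r: "adj r = r" "r * r = 1 - k" "\<And>z. z * k = k * z \<Longrightarrow> z * r = r * z"
    using sqrt_one_minus_sa by blast
  have gr: "g * r = r * g"
    using r(3)[of g] gm by (simp add: k_def)
  have "(g * r) * (g * r) = (g * g) * (r * r)"
    by (metis gr mult.assoc)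
  also have "\<dots> = y - of_real (1 / norm m)"
    by (simp add: g(2) r(2) k_def algebra_simps m of_real_def)
  finally have "(g * r) * (g * r) = y - of_real (1 / norm m)" .
  moreover have "adj (g * r) = g * r"
    using r(1) spec_nonneg_sa[OF g(1)] gr by (simp add: adj_mult)
  ultimately show "spec_nonneg (y - of_real (1 / norm m))"
    using spec_nonneg_mult_self by metis
qed

lemma nonneg_if_spec_nonneg_of_real:
  assumes "spec_nonneg (of_real T :: 'a::cstar_algebra)"
  shows "T \<ge> 0"
proof -
  have "norm (of_real \<bar>T\<bar> - of_real T :: 'a) \<le> \<bar>T\<bar>"
    using assms by (simp add: spec_nonneg_iff)
  then have "\<bar>\<bar>T\<bar> - T\<bar> \<le> \<bar>T\<bar>"
    by (metis norm_of_real of_real_diff)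
  then show ?thesis
    by linarith
qed

text \<open>Commuting square roots \<open>w\<close> of \<open>y\<close> and \<open>v\<close> of \<open>T - y\<close> give \<open>u = w + i v\<close>
  with \<open>u* u = T\<close> and \<open>2 w = u + u*\<close>.\<close>

lemma norm_le_if_spec_nonneg_diff:
  fixes y :: "'a::cstar_algebra"
  assumes y: "spec_nonneg y" and Ty: "spec_nonneg (of_real T - y)"
  shows "norm y \<le> T"
proof -
  obtain w where w: "spec_nonneg w" "w * w = y"
    using sqrt_spec_nonneg[OF y] by blast
  obtain v where v: "spec_nonneg v" "v * v = of_real T - y"
    "\<And>z. z * (of_real T - y) = (of_real T - y) * z \<Longrightarrow> z * v = v * z"
    using sqrt_spec_nonneg[OF Ty] by blast
  have w_sa: "adj w = w" and v_sa: "adj v = v"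
    using w(1) v(1) by (simp_all add: spec_nonneg_sa)
  have "w * y = y * w"
    using w(2) by (metis mult.assoc)
  then have wv: "w * v = v * w"
    using v(3)[of w] by (simp add: algebra_simps of_real_def)
  define u where "u = w + times_i v"
  have "adj u * u = of_real T"
    using adj_mult_self_commuting_sum[OF w_sa v_sa wv] w(2) v(2) by (simp add: u_def)
  then have nu: "(norm u)\<^sup>2 = \<bar>T\<bar>"
    using cstar_identity[of u] by simp
  have "2 * norm w = norm (u + adj u)"
    using norm_scaleR[of 2 w] by (simp add: u_def adj_add adj_times_i w_sa v_sa scaleR_2)
  also have "\<dots> \<le> 2 * norm u"
    using norm_triangle_ineq[of u "adj u"] by simp
  finally have "(norm w)\<^sup>2 \<le> (norm u)\<^sup>2"
    by (simp add: power_mono)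
  moreover have "norm y = (norm w)\<^sup>2"
    using norm_mult_self_sa[OF w_sa] w(2) by simp
  ultimately have "norm y \<le> \<bar>T\<bar>"
    using nu by simp
  moreover have "spec_nonneg (of_real T :: 'a)"
    using spec_nonneg_add[OF Ty y] by simp
  then have "T \<ge> 0"
    by (rule nonneg_if_spec_nonneg_of_real)
  ultimately show ?thesis
    by simp
qed

lemma not_invertible_one_minus_spec_nonneg:
  fixes w :: "'a::cstar_algebra"
  assumes w: "spec_nonneg w" "norm w = 1" and m: "(1 - w) * m = 1" "m * (1 - w) = 1"
  shows False
proof -
  have "spec_nonneg (1 - w)"
    using w by (auto simp: spec_nonneg_def intro!: exI[of _ 1])
  note gap = spec_nonneg_inverse_gap[OF this m]
  have "norm (1 - w) \<le> 1"
    using w by (simp add: spec_nonneg_iff)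
  then have "norm ((1 - w) * m) \<le> norm m"
    using norm_mult_ineq[of "1 - w" m] by (simp add: mult_left_le_one_le order_trans)
  then have "1 \<le> norm m"
    using m by simp
  have "1 - w - of_real (1 / norm m) = of_real (1 - 1 / norm m) - w"
    by (simp add: algebra_simps)
  then have "norm w \<le> 1 - 1 / norm m"
    using norm_le_if_spec_nonneg_diff[OF w(1)] gap(2) by metis
  then show False
    using w(2) gap(1) by simp
qed

lemma spec_nonneg_closed:
  fixes f :: "nat \<Rightarrow> 'a::cstar_algebra"
  assumes lim: "f \<longlonglongrightarrow> y" and f: "\<And>n. spec_nonneg (f n)"
  shows "spec_nonneg y"
proof -
  have "(\<lambda>n. adj (f n)) \<longlonglongrightarrow> adj y"
    using bounded_linear.tendsto[OF bounded_linear_adj lim] .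
  moreover have "(\<lambda>n. adj (f n)) = f"
    using f by (simp add: spec_nonneg_sa)
  ultimately have "adj y = y"
    using lim LIMSEQ_unique by auto
  moreover have "norm (of_real (norm y) - y) \<le> norm y"
  proof (rule tendsto_le[OF trivial_limit_sequentially])
    show "(\<lambda>n. norm (of_real (norm (f n)) - f n)) \<longlonglongrightarrow> norm (of_real (norm y) - y)"
      by (intro tendsto_intros lim)
    show "(\<lambda>n. norm (f n)) \<longlonglongrightarrow> norm y"
      by (intro tendsto_intros lim)
    show "\<forall>\<^sub>F n in sequentially. norm (of_real (norm (f n)) - f n) \<le> norm (f n)"
      using f by (auto simp: spec_nonneg_iff)
  qed
  ultimately show ?thesis
    by (simp add: spec_nonneg_iff)
qed

section \<open>Every \<open>b* b\<close> has nonnegative spectrum\<close>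

lemma mult_square_commuting3:
  fixes a b c :: "'a::semigroup_mult"
  assumes "a * b = b * a" "a * c = c * a" "b * c = c * b"
  shows "(a * b * c) * (a * b * c) = (a * a) * (b * b) * (c * c)"
proof -
  have "c * (a * x) = a * (c * x)" "c * (b * x) = b * (c * x)" "b * (a * x) = a * (b * x)" for x
    by (metis assms mult.assoc)+
  then show ?thesis
    using assms(3)[symmetric] by (simp add: mult.assoc)
qed

lemma mult_rev_commuting3:
  fixes a b c :: "'a::semigroup_mult"
  assumes "a * b = b * a" "a * c = c * a" "b * c = c * b"
  shows "c * b * a = a * b * c"
  by (metis assms mult.assoc)

lemma one_plus_mult_swap_inverse:
  fixes a b m :: "'a::ring_1"
  assumes "(1 + b * a) * m = 1" "m * (1 + b * a) = 1"
  shows "(1 + a * b) * (1 - a * m * b) = 1" "(1 - a * m * b) * (1 + a * b) = 1"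
proof -
  have "(1 + a * b) * (1 - a * m * b) = 1 + a * b - a * ((1 + b * a) * m) * b"
    by (simp add: algebra_simps)
  then show "(1 + a * b) * (1 - a * m * b) = 1"
    using assms(1) by simp
  have "(1 - a * m * b) * (1 + a * b) = 1 + a * b - a * (m * (1 + b * a)) * b"
    by (simp add: algebra_simps)
  then show "(1 - a * m * b) * (1 + a * b) = 1"
    using assms(2) by simp
qed

lemma spec_nonneg_mult_self_mult_inverse:
  fixes y m z :: "'a::cstar_algebra"
  assumes y: "spec_nonneg y" and m: "y * m = 1" "m * y = 1"
    and z: "adj z = z" "z * y = y * z"
  shows "spec_nonneg (z * z * m)"
proof -
  obtain g where g: "spec_nonneg g" "g * g = y" "\<And>w. w * y = y * w \<Longrightarrow> w * g = g * w"
    using sqrt_spec_nonneg[OF y] by blast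
  have zg: "z * g = g * z" and mg: "m * g = g * m"
    using g(3)[OF z(2)] g(3)[of m] m by simp_all
  have zm: "z * m = m * z"
    using commute_inverse[OF z(2) m] .
  have m_sa: "adj m = m" and g_sa: "adj g = g"
    using adj_inverse[OF spec_nonneg_sa[OF y] m] spec_nonneg_sa[OF g(1)] .
  define q where "q = z * g * m"
  have "q * q = (z * z) * (g * g) * (m * m)"
    unfolding q_def by (rule mult_square_commuting3[OF zg zm mg[symmetric]])
  also have "\<dots> = z * z * m"
    using m(1) by (simp add: g(2)) (metis mult.assoc mult_1_left)
  finally have qq: "q * q = z * z * m" .
  have "adj q = m * g * z"
    by (simp add: q_def adj_mult m_sa g_sa z(1) mult.assoc)
  also have "\<dots> = q"
    unfolding q_def by (rule mult_rev_commuting3[OF zg zm mg[symmetric]])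
  finally show ?thesis
    using spec_nonneg_mult_self qq by metis
qed

lemma norm_mult_inverse_shift_le:
  fixes p m :: "'a::cstar_algebra"
  assumes "(p + of_real e) * m = 1" "norm m \<le> 1 / e" "e > 0"
  shows "norm (p * m) \<le> 2"
proof -
  have "p * m = 1 - e *\<^sub>R m"
    using assms(1) by (simp add: algebra_simps of_real_def)
  then have "norm (p * m) \<le> 1 + e * norm m"
    using norm_triangle_ineq4[of 1 "e *\<^sub>R m"] assms(3) by simp
  then show ?thesis
    using assms(2,3) by (simp add: field_simps)
qed

lemma norm_mult_inverse_square_le:
  fixes p z m :: "'a::cstar_algebra"
  assumes p: "adj p = p" and z: "adj z = z" "z * p = p * z" "z * z = p * z"
    and e: "e > 0" and m: "(p + of_real e) * m = 1" "m * (p + of_real e) = 1" "norm m \<le> 1 / e"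
  shows "(norm (z * m))\<^sup>2 \<le> 2 * norm z / e"
proof -
  have "z * (p + of_real e) = (p + of_real e) * z" "p * (p + of_real e) = (p + of_real e) * p"
    using z(2) by (simp_all add: algebra_simps of_real_def)
  then have zm: "z * m = m * z" and pm: "p * m = m * p"
    using commute_inverse m(1,2) by blast+
  have m_sa: "adj m = m"
    using adj_inverse[OF _ m(1,2)] p by (simp add: adj_add)
  have "adj (z * m) * (z * m) = m * (z * z) * m"
    by (simp add: adj_mult m_sa z(1) mult.assoc)
  also have "\<dots> = (m * z) * p * m"
    by (simp add: z(2,3) mult.assoc)
  also have "\<dots> = z * (m * p) * m"
    by (simp add: zm[symmetric] mult.assoc)
  also have "\<dots> = z * (p * m) * m"
    by (simp only: pm)
  finally have "(norm (z * m))\<^sup>2 = norm (z * (p * m) * m)"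
    by (metis cstar_identity)
  also have "\<dots> \<le> norm (z * (p * m)) * norm m"
    by (rule norm_mult_ineq)
  also have "\<dots> \<le> norm z * norm (p * m) * norm m"
    by (rule mult_right_mono[OF norm_mult_ineq norm_ge_zero])
  also have "norm (p * m) \<le> 2"
    using m(1,3) e by (rule norm_mult_inverse_shift_le)
  then have "norm z * norm (p * m) * norm m \<le> norm z * 2 * (1 / e)"
    using m(3) by (intro mult_mono) (auto intro: mult_left_mono)
  finally show ?thesis
    by (simp add: mult.commute)
qed

text \<open>From \<open>z = z (p + e) m = z\<^sup>2 m + e z m\<close>: the approximants \<open>z\<^sup>2 m\<close> are within
  \<open>e \<parallel>z m\<parallel> = O(sqrt e)\<close> of \<open>z\<close>.\<close>

lemma norm_mult_self_mult_inverse_minus_le: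
  fixes p z m :: "'a::cstar_algebra"
  assumes p: "adj p = p" and z: "adj z = z" "z * p = p * z" "z * z = p * z"
    and e: "e > 0" and m: "(p + of_real e) * m = 1" "m * (p + of_real e) = 1" "norm m \<le> 1 / e"
  shows "norm (z * z * m - z) \<le> sqrt (2 * norm z * e)"
proof -
  have "z = z * ((p + of_real e) * m)"
    by (simp add: m(1))
  also have "\<dots> = (z * p) * m + e *\<^sub>R (z * m)"
    by (simp add: algebra_simps of_real_def)
  also have "z * p = z * z"
    using z(2,3) by simp
  finally have "z * z * m - z = - (e *\<^sub>R (z * m))"
    by (simp add: algebra_simps)
  then have "norm (z * z * m - z) = e * norm (z * m)"
    using e by simp
  moreover have "e\<^sup>2 * (norm (z * m))\<^sup>2 \<le> e\<^sup>2 * (2 * norm z / e)"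
    using norm_mult_inverse_square_le[OF assms] by (rule mult_left_mono) simp
  then have "(e * norm (z * m))\<^sup>2 \<le> 2 * norm z * e"
    using e by (simp add: power_mult_distrib power2_eq_square field_simps)
  ultimately show ?thesis
    by (simp add: real_le_rsqrt)
qed

lemma spec_nonneg_if_mult_self_eq:
  fixes p z :: "'a::cstar_algebra"
  assumes p: "spec_nonneg p" and z: "adj z = z" "z * p = p * z" "z * z = p * z"
  shows "spec_nonneg z"
proof -
  define e where "e n = inverse (real (Suc n))" for n
  have e_pos: "e n > 0" for n
    by (simp add: e_def)
  have "\<forall>n. \<exists>m. (p + of_real (e n)) * m = 1 \<and> m * (p + of_real (e n)) = 1 \<and> norm m \<le> 1 / e n"
    using spec_nonneg_plus_inverse[OF p e_pos] by blast
  then obtain m where m: "\<And>n. (p + of_real (e n)) * m n = 1" "\<And>n. m n * (p + of_real (e n)) = 1"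
    "\<And>n. norm (m n) \<le> 1 / e n"
    unfolding choice_iff by blast
  have pos: "spec_nonneg (z * z * m n)" for n
  proof (rule spec_nonneg_mult_self_mult_inverse[OF _ m(1,2) z(1)])
    show "spec_nonneg (p + of_real (e n))"
      using spec_nonneg_add[OF p spec_nonneg_of_real] e_pos[of n] by simp
    show "z * (p + of_real (e n)) = (p + of_real (e n)) * z"
      using z(2) by (simp add: algebra_simps of_real_def)
  qed
  have "(\<lambda>n. sqrt (2 * norm z * e n)) \<longlonglongrightarrow> sqrt (2 * norm z * 0)"
    unfolding e_def by (intro tendsto_intros LIMSEQ_inverse_real_of_nat)
  then have "(\<lambda>n. sqrt (2 * norm z * e n)) \<longlonglongrightarrow> 0"
    by simp
  then have "(\<lambda>n. z * z * m n - z) \<longlonglongrightarrow> 0"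
    by (rule Lim_null_comparison[OF always_eventually, rotated])
       (use norm_mult_self_mult_inverse_minus_le[OF spec_nonneg_sa[OF p] z e_pos m] in blast)
  then have "(\<lambda>n. z * z * m n) \<longlonglongrightarrow> z"
    by (simp add: LIM_zero_iff)
  then show ?thesis
    using pos by (rule spec_nonneg_closed)
qed

lemma spec_nonneg_mult_adj_add_adj_mult: "spec_nonneg (c * adj c + adj c * (c::'a::cstar_algebra))"
proof -
  define x where "x = (1/2) *\<^sub>R (c + adj c)"
  define y where "y = (1/2) *\<^sub>R times_i (adj c - c)"
  have x_sa: "adj x = x" and y_sa: "adj y = y"
    by (simp_all add: x_def y_def adj_add adj_adj add.commute adj_times_i times_i_diff)
  have "times_i (adj c - c) * times_i (adj c - c) = - ((adj c - c) * (adj c - c))"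
    by (simp add: times_i_mult_left times_i_mult_right)
  then have "x * x + y * y = (1/4) *\<^sub>R ((c + adj c) * (c + adj c) - (adj c - c) * (adj c - c))"
    by (simp add: x_def y_def scaleR_diff_right)
  also have "\<dots> = (1/2) *\<^sub>R (c * adj c + adj c * c)"
    by (simp add: algebra_simps scaleR_2 flip: scaleR_add_left)
  finally have "c * adj c + adj c * c = 2 *\<^sub>R (x * x) + 2 *\<^sub>R (y * y)"
    by (simp add: scaleR_add_right[symmetric])
  then show ?thesis
    by (simp add: spec_nonneg_add spec_nonneg_scaleR spec_nonneg_mult_self x_sa y_sa)
qed

text \<open>If \<open>c* c \<le> 0 \<le> c c*\<close> and \<open>c* c \<noteq> 0\<close>, normalise so that \<open>\<parallel>c* c\<parallel> = 1\<close>: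
  \<open>1 + c c*\<close> is invertible, hence so is \<open>1 + c* c\<close>, which contradicts
  \<open>not_invertible_one_minus_spec_nonneg\<close>.\<close>

lemma adj_mult_self_eq_0_if_nonpos:
  fixes c :: "'a::cstar_algebra"
  assumes neg: "spec_nonneg (- (adj c * c))" and pos: "spec_nonneg (c * adj c)"
  shows "adj c * c = 0"
proof (rule ccontr)
  assume nz: "adj c * c \<noteq> 0"
  define r where "r = norm (adj c * c)"
  have r_pos: "r > 0"
    using nz by (simp add: r_def)
  define c' where "c' = (1 / sqrt r) *\<^sub>R c"
  define W where "W = - (adj c' * c')"
  have W: "W = (1 / r) *\<^sub>R (- (adj c * c))"
    using r_pos by (simp add: W_def c'_def)
  have "spec_nonneg W" "norm W = 1"
    using spec_nonneg_scaleR[OF neg] r_pos by (simp_all add: W r_def)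
  have "spec_nonneg (c' * adj c')"
    using spec_nonneg_scaleR[OF pos, of "1 / r"] r_pos by (simp add: c'_def)
  then obtain m where "(c' * adj c' + of_real 1) * m = 1" "m * (c' * adj c' + of_real 1) = 1"
    using spec_nonneg_plus_inverse[of "c' * adj c'" 1] by auto
  then have "(1 + c' * adj c') * m = 1" "m * (1 + c' * adj c') = 1"
    by (simp_all add: add.commute)
  from one_plus_mult_swap_inverse[OF this]
  have "(1 - W) * (1 - adj c' * m * c') = 1" "(1 - adj c' * m * c') * (1 - W) = 1"
    by (simp_all add: W_def)
  then show False
    using not_invertible_one_minus_spec_nonneg \<open>spec_nonneg W\<close> \<open>norm W = 1\<close> by blast
qed

lemma sa_eq_0_if_cube_eq_0:
  fixes z :: "'a::cstar_algebra"
  assumes "adj z = z" "z * z * z = 0"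
  shows "z = 0"
proof -
  have "(z * z) * (z * z) = 0"
    using assms(2) by (metis mult.assoc mult_zero_right)
  then have "norm (z * z) = 0"
    using norm_mult_self_sa[of "z * z"] assms(1) by (simp add: adj_mult)
  then show ?thesis
    using norm_mult_self_sa[OF assms(1)] by simp
qed

text \<open>\<open>p = |h|\<close> and \<open>z = (|h| - h) / 2\<close>, the negative part of \<open>h\<close>.\<close>

lemma sa_obtains_negative_part:
  fixes h :: "'a::cstar_algebra"
  assumes h_sa: "adj h = h"
  obtains p z where "spec_nonneg p" "spec_nonneg z" "h = p - 2 *\<^sub>R z" "z * z = p * z"
proof -
  obtain p where p: "spec_nonneg p" "p * p = h * h"
    "\<And>w. w * (h * h) = (h * h) * w \<Longrightarrow> w * p = p * w"
    using sqrt_spec_nonneg[OF spec_nonneg_mult_self[OF h_sa]] by blast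
  have hp: "h * p = p * h"
    using p(3)[of h] by (simp add: mult.assoc)
  define z where "z = (1/2) *\<^sub>R (p - h)"
  have z_sa: "adj z = z"
    using spec_nonneg_sa[OF p(1)] h_sa by (simp add: z_def)
  have zp: "z * p = p * z"
    using hp by (simp add: z_def algebra_simps)
  have "(p - h) * (p - h) = 2 *\<^sub>R (p * (p - h))"
    using p(2) hp by (simp add: algebra_simps scaleR_2)
  then have zz: "z * z = p * z"
    by (simp add: z_def)
  have "spec_nonneg z"
    using spec_nonneg_if_mult_self_eq[OF p(1) z_sa zp zz] .
  moreover have "h = p - 2 *\<^sub>R z"
    by (simp add: z_def)
  ultimately show ?thesis
    using that p(1) zz by blast
qed

text \<open>For \<open>c = b z\<close> with \<open>z\<close> the negative part of \<open>b* b\<close> one has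
  \<open>c* c = - z\<^sup>3 \<le> 0\<close> while \<open>c c* = (c c* + c* c) + z\<^sup>3 \<ge> 0\<close>, forcing \<open>z = 0\<close>.\<close>

lemma spec_nonneg_adj_mult_self: "spec_nonneg (adj b * (b::'a::cstar_algebra))"
proof -
  have "adj (adj b * b) = adj b * b"
    by (simp add: adj_mult adj_adj)
  then obtain p z where p: "spec_nonneg p" and z: "spec_nonneg z"
    and h: "adj b * b = p - 2 *\<^sub>R z" and zz: "z * z = p * z"
    by (rule sa_obtains_negative_part)
  have z_sa: "adj z = z"
    using spec_nonneg_sa[OF z] .
  define c where "c = b * z"
  have "adj c * c = z * (p - 2 *\<^sub>R z) * z"
    by (simp add: c_def adj_mult z_sa mult.assoc flip: h)
  also have "\<dots> = z * (p * z) - 2 *\<^sub>R (z * z * z)"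
    by (simp add: algebra_simps)
  also have "z * (p * z) = z * z * z"
    by (simp add: zz[symmetric] mult.assoc)
  also have "z * z * z - 2 *\<^sub>R (z * z * z) = - (z * z * z)"
    by (simp add: scaleR_2)
  finally have cc: "adj c * c = - (z * z * z)" .
  obtain r where r: "spec_nonneg r" "r * r = z"
    using sqrt_spec_nonneg[OF z] by blast
  have "z * z * z = (r * r * r) * (r * r * r)"
    by (simp add: r(2)[symmetric] mult.assoc)
  then have cube_pos: "spec_nonneg (z * z * z)"
    using spec_nonneg_mult_self[of "r * r * r"] spec_nonneg_sa[OF r(1)]
    by (simp add: adj_mult mult.assoc)
  have "spec_nonneg ((c * adj c + adj c * c) + z * z * z)"
    by (rule spec_nonneg_add[OF spec_nonneg_mult_adj_add_adj_mult cube_pos])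
  then have "spec_nonneg (c * adj c)"
    by (simp add: cc)
  moreover have "spec_nonneg (- (adj c * c))"
    using cube_pos by (simp add: cc)
  ultimately have "adj c * c = 0"
    by (intro adj_mult_self_eq_0_if_nonpos)
  then have "z = 0"
    using sa_eq_0_if_cube_eq_0[OF z_sa] by (simp add: cc)
  then show ?thesis
    using p by (simp add: h)
qed

lemma cpos_iff_spec_nonneg: "cpos a \<longleftrightarrow> spec_nonneg (a::'a::cstar_algebra)"
proof
  assume "cpos a"
  then show "spec_nonneg a"
    using spec_nonneg_adj_mult_self by (auto simp: cpos_def)
next
  assume "spec_nonneg a"
  then obtain w where "spec_nonneg w" "w * w = a"
    by (rule sqrt_spec_nonneg)
  then show "cpos a"
    unfolding cpos_def using spec_nonneg_sa by metis
qed

lemma cle_iff_spec_nonneg: "cle a b \<longleftrightarrow> spec_nonneg (b - (a::'a::cstar_algebra))"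
  by (simp add: cle_def cpos_iff_spec_nonneg)

lemma cle_refl: "cle a (a::'a::cstar_algebra)"
  by (simp add: cle_iff_spec_nonneg spec_nonneg_0)

lemma cle_add: "cle a b \<Longrightarrow> cle c d \<Longrightarrow> cle (a + c) (b + (d::'a::cstar_algebra))"
  using spec_nonneg_add[of "b - a" "d - c"] by (simp add: cle_iff_spec_nonneg algebra_simps)

lemma cle_trans [trans]: "cle a b \<Longrightarrow> cle b c \<Longrightarrow> cle a (c::'a::cstar_algebra)"
  using spec_nonneg_add[of "c - b" "b - a"] by (simp add: cle_iff_spec_nonneg)

lemma cle_sum:
  "(\<And>i. i \<in> A \<Longrightarrow> cle (f i) (g i)) \<Longrightarrow> cle (sum f A) (sum g A :: 'a::cstar_algebra)"
  by (induction A rule: infinite_finite_induct) (simp_all add: cle_refl cle_add)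

lemma cle_adj_mult_mult: "cle a b \<Longrightarrow> cle (adj x * a * x) (adj x * b * (x::'a::cstar_algebra))"
proof -
  assume "cle a b"
  then obtain g where g: "b - a = adj g * g"
    by (auto simp: cle_def cpos_def)
  have "adj x * b * x - adj x * a * x = adj x * (b - a) * x"
    by (simp add: algebra_simps)
  also have "\<dots> = adj (g * x) * (g * x)"
    by (simp add: g adj_mult mult.assoc)
  finally show ?thesis
    by (auto simp: cle_def cpos_def)
qed

lemma cle_of_real_if_norm_le: "adj h = h \<Longrightarrow> norm h \<le> l \<Longrightarrow> cle h (of_real l :: 'a::cstar_algebra)"
  unfolding cle_iff_spec_nonneg spec_nonneg_def
  by (auto intro!: exI[of _ l] intro: order_trans[OF norm_ge_zero])

lemma norm_le_if_cle_of_real: "cle 0 u \<Longrightarrow> cle u (of_real l) \<Longrightarrow> norm u \<le> l"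
  for u :: "'a::cstar_algebra"
  by (rule norm_le_if_spec_nonneg_diff) (simp_all add: cle_iff_spec_nonneg)

lemma sa_if_cle_0: "cle 0 u \<Longrightarrow> adj u = (u::'a::cstar_algebra)"
  by (simp add: cle_iff_spec_nonneg spec_nonneg_sa)

lemma cgt0_obtains_of_real_cle:
  fixes e :: "'a::cstar_algebra"
  assumes "cgt0 e"
  obtains \<delta> where "\<delta> > 0" "cle (of_real \<delta>) e"
proof -
  obtain y where "spec_nonneg e" "e * y = 1" "y * e = 1"
    using assms by (auto simp: cgt0_def cinvertible_def cpos_iff_spec_nonneg)
  from spec_nonneg_inverse_gap[OF this] show ?thesis
    using that[of "1 / norm y"] by (simp add: cle_iff_spec_nonneg)
qed

section \<open>Forward convergence of contractive orbits\<close>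

lemma casym_metric_chain:
  assumes d: "casym_metric d" and "p \<le> n"
  shows "cle (d (xs p) (xs n)) (\<Sum>i\<in>{p..<n}. d (xs i) (xs (Suc i)))"
  using \<open>p \<le> n\<close>
proof (induction n rule: dec_induct)
  case base
  have "d (xs p) (xs p) = 0"
    using d by (simp add: casym_metric_def)
  then show ?case
    by (simp add: cle_refl)
next
  case (step n)
  have "cle (d (xs p) (xs (Suc n))) (d (xs p) (xs n) + d (xs n) (xs (Suc n)))"
    using d by (simp add: casym_metric_def)
  also have "cle \<dots> ((\<Sum>i\<in>{p..<n}. d (xs i) (xs (Suc i))) + d (xs n) (xs (Suc n)))"
    using step.IH by (rule cle_add) (rule cle_refl)
  finally show ?case
    using step.hyps(1) by simp
qed

lemma sum_power_atLeastLessThan_le: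
  fixes q :: real
  assumes "0 \<le> q" "q < 1"
  shows "(\<Sum>i\<in>{p..<n}. q ^ i) \<le> q ^ p / (1 - q)"
proof (cases "p \<le> n")
  case True
  have "(\<Sum>i\<in>{p..<n}. q ^ i) = (\<Sum>i<n - p. q ^ (p + i))"
    using True by (intro sum.reindex_bij_witness[of _ "\<lambda>i. p + i" "\<lambda>i. i - p"]) auto
  also have "\<dots> = q ^ p * (\<Sum>i<n - p. q ^ i)"
    by (simp add: power_add sum_distrib_left)
  also have "(\<Sum>i<n - p. q ^ i) \<le> 1 / (1 - q)"
    using assms by (simp add: sum_gp_strict divide_right_mono)
  finally show ?thesis
    using assms by (simp add: mult_left_mono)
qed (use assms in simp)

lemma fwd_cauchy_if_dist_Suc_le_geometric:
  fixes d :: "'x \<Rightarrow> 'x \<Rightarrow> 'a::cstar_algebra"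
  assumes d: "casym_metric d"
    and step: "\<And>i. cle (d (xs i) (xs (Suc i))) (B i)"
    and B: "\<And>i. adj (B i) = B i" "\<And>i. norm (B i) \<le> C * q ^ i"
    and q: "0 \<le> q" "q < 1"
  shows "fwd_cauchy d xs"
  unfolding fwd_cauchy_def
proof (intro allI impI)
  fix e :: 'a
  assume "cgt0 e"
  then obtain \<delta> where \<delta>: "\<delta> > 0" "cle (of_real \<delta>) e"
    by (rule cgt0_obtains_of_real_cle)
  have C: "C \<ge> 0"
    using order_trans[OF norm_ge_zero B(2)[of 0]] by simp
  have "(\<lambda>k. C / (1 - q) * q ^ k) \<longlonglongrightarrow> 0"
    using q by (intro tendsto_mult_right_zero LIMSEQ_power_zero) simp_all
  then have "\<forall>\<^sub>F k in sequentially. C / (1 - q) * q ^ k < \<delta>"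
    using \<delta>(1) by (rule order_tendstoD(2))
  then obtain k where k: "C / (1 - q) * q ^ k < \<delta>"
    unfolding eventually_sequentially by (meson order_refl)
  have "cle (d (xs p) (xs n)) e" if "k \<le> p" "p < n" for p n
  proof -
    have "norm (\<Sum>i\<in>{p..<n}. B i) \<le> (\<Sum>i\<in>{p..<n}. C * q ^ i)"
      using B(2) by (intro order_trans[OF norm_sum sum_mono])
    also have "\<dots> \<le> C * (q ^ p / (1 - q))"
      using mult_left_mono[OF sum_power_atLeastLessThan_le[OF q] C] by (simp add: sum_distrib_left)
    also have "\<dots> \<le> C / (1 - q) * q ^ k"
      using C q that(1) by (simp add: power_decreasing mult_left_mono divide_right_mono)
    finally have norm_sum: "norm (\<Sum>i\<in>{p..<n}. B i) \<le> \<delta>"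
      using k by linarith
    have "cle (d (xs p) (xs n)) (\<Sum>i\<in>{p..<n}. d (xs i) (xs (Suc i)))"
      using casym_metric_chain[OF d] that(2) by simp
    also have "cle \<dots> (\<Sum>i\<in>{p..<n}. B i)"
      using step by (rule cle_sum)
    also have "cle \<dots> (of_real \<delta>)"
      using norm_sum B(1) by (intro cle_of_real_if_norm_le) (simp_all add: adj_sum)
    also have "cle \<dots> e"
      by (rule \<delta>(2))
    finally show ?thesis .
  qed
  then show "\<exists>k. \<forall>n p. k \<le> p \<and> p < n \<longrightarrow> cle (d (xs p) (xs n)) e"
    by blast
qed

lemma contractive_dist_iterate_le:
  assumes "\<forall>y\<in>orbit T x. cle (d (T y) (T (T y))) (adj a * d y (T y) * a)"
  shows "cle (d ((T ^^ n) x) ((T ^^ Suc n) x)) (adj (a ^ n) * d x (T x) * a ^ n)"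
proof (induction n)
  case 0
  then show ?case
    by (simp add: cle_refl)
next
  case (Suc n)
  have "(T ^^ n) x \<in> orbit T x"
    by (auto simp: orbit_def)
  then have "cle (d ((T ^^ Suc n) x) ((T ^^ Suc (Suc n)) x))
      (adj a * d ((T ^^ n) x) ((T ^^ Suc n) x) * a)"
    using assms by simp
  also have "cle \<dots> (adj a * (adj (a ^ n) * d x (T x) * a ^ n) * a)"
    using Suc.IH by (rule cle_adj_mult_mult)
  also have "adj a * (adj (a ^ n) * d x (T x) * a ^ n) * a
      = adj (a ^ Suc n) * d x (T x) * a ^ Suc n"
    by (simp add: adj_mult adj_power power_Suc2 mult.assoc power_commutes)
  finally show ?case .
qed

lemma norm_adj_power_mult_power_le: "norm (adj (a ^ n) * u * a ^ n) \<le> norm u * ((norm a)\<^sup>2) ^ n"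
  for a u :: "'a::cstar_algebra"
proof -
  have "norm (adj (a ^ n) * u * a ^ n) \<le> norm (adj (a ^ n) * u) * norm (a ^ n)"
    by (rule norm_mult_ineq)
  also have "\<dots> \<le> norm (adj (a ^ n)) * norm u * norm (a ^ n)"
    by (rule mult_right_mono[OF norm_mult_ineq norm_ge_zero])
  also have "\<dots> = norm u * (norm (a ^ n))\<^sup>2"
    by (simp add: power2_eq_square mult_ac)
  also have "(norm (a ^ n))\<^sup>2 \<le> ((norm a)\<^sup>2) ^ n"
    using power_mono[OF norm_power_ineq norm_ge_zero, of a n 2]
    by (simp add: power_mult[symmetric] mult.commute)
  finally show ?thesis
    by (simp add: mult_left_mono)
qed

lemma norm_dist_Suc_tendsto_0_if_geometric:
  fixes d :: "'x \<Rightarrow> 'x \<Rightarrow> 'a::cstar_algebra"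
  assumes d: "casym_metric d"
    and step: "\<And>i. cle (d (xs i) (xs (Suc i))) (B i)"
    and B: "\<And>i. adj (B i) = B i" "\<And>i. norm (B i) \<le> C * q ^ i"
    and q: "0 \<le> q" "q < 1"
  shows "(\<lambda>n. norm (d (xs n) (xs (Suc n)))) \<longlonglongrightarrow> 0"
proof -
  have bound: "norm (d (xs n) (xs (Suc n))) \<le> C * q ^ n" for n
  proof -
    have "cle (d (xs n) (xs (Suc n))) (of_real (norm (B n)))"
      using step cle_of_real_if_norm_le[OF B(1) order_refl] by (rule cle_trans)
    then have "norm (d (xs n) (xs (Suc n))) \<le> norm (B n)"
      using d by (intro norm_le_if_cle_of_real) (simp_all add: casym_metric_def)
    then show ?thesis
      using B(2)[of n] by linarith
  qed
  have "(\<lambda>n. C * q ^ n) \<longlonglongrightarrow> 0"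
    using q by (intro tendsto_mult_right_zero LIMSEQ_power_zero) simp_all
  then show ?thesis
    by (rule Lim_null_comparison[OF always_eventually, rotated]) (use bound in simp)
qed

lemma fixed_point_iff_fwd_orbital_lsc:
  assumes d: "casym_metric d" and orb: "\<And>n. xs n \<in> orbit T x"
    and conv: "fwd_converges d xs x0"
    and lim: "(\<lambda>n. norm (d (xs n) (T (xs n)))) \<longlonglongrightarrow> 0"
  shows "T x0 = x0 \<longleftrightarrow> fwd_orbital_lsc d T x (\<lambda>z. d z (T z)) x0"
proof
  assume "T x0 = x0"
  then have "ereal (norm (d x0 (T x0))) = 0"
    using d by (simp add: casym_metric_def)
  then show "fwd_orbital_lsc d T x (\<lambda>z. d z (T z)) x0"
    unfolding fwd_orbital_lsc_def by (auto intro: Liminf_bounded)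
next
  assume "fwd_orbital_lsc d T x (\<lambda>z. d z (T z)) x0"
  then have "ereal (norm (d x0 (T x0))) \<le> liminf (\<lambda>n. ereal (norm (d (xs n) (T (xs n)))))"
    using orb conv unfolding fwd_orbital_lsc_def by blast
  also have "\<dots> = 0"
    using lim by (intro lim_imp_Liminf) (simp_all add: zero_ereal_def)
  finally have "d x0 (T x0) = 0"
    by simp
  then show "T x0 = x0"
    using d by (simp add: casym_metric_def)
qed

theorem mainTheorem3:
  fixes d :: "'x \<Rightarrow> 'x \<Rightarrow> 'a::cstar_algebra"
    and T :: "'x \<Rightarrow> 'x" and x :: 'x and a :: 'a
  assumes "casym_metric d"
    and "fwd_complete d"
    and "norm a < 1"
    and "\<forall>y\<in>orbit T x. cle (d (T y) (T (T y))) (adj a * d y (T y) * a)"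
  shows "\<exists>x0. fwd_converges d (\<lambda>n. (T ^^ n) x) x0 \<and>
           (T x0 = x0 \<longleftrightarrow> fwd_orbital_lsc d T x (\<lambda>z. d z (T z)) x0)"
proof -
  define xs where "xs = (\<lambda>n. (T ^^ n) x)"
  define B where "B n = adj (a ^ n) * d x (T x) * a ^ n" for n
  have step: "cle (d (xs n) (xs (Suc n))) (B n)" for n
    unfolding xs_def B_def using assms(4) by (rule contractive_dist_iterate_le)
  have "adj (d x (T x)) = d x (T x)"
    using assms(1) by (intro sa_if_cle_0) (simp add: casym_metric_def)
  then have B_sa: "adj (B n) = B n" for n
    by (simp add: B_def adj_mult adj_adj mult.assoc)
  have B_bound: "norm (B n) \<le> norm (d x (T x)) * ((norm a)\<^sup>2) ^ n" for n
    unfolding B_def by (rule norm_adj_power_mult_power_le)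
  have q: "0 \<le> (norm a)\<^sup>2" "(norm a)\<^sup>2 < 1"
    using assms(3) by (simp_all add: abs_square_less_1)
  have "fwd_cauchy d xs"
    using assms(1) step B_sa B_bound q by (rule fwd_cauchy_if_dist_Suc_le_geometric)
  then obtain x0 where conv: "fwd_converges d xs x0"
    using assms(2) unfolding fwd_complete_def by blast
  have "(\<lambda>n. norm (d (xs n) (xs (Suc n)))) \<longlonglongrightarrow> 0"
    using assms(1) step B_sa B_bound q by (rule norm_dist_Suc_tendsto_0_if_geometric)
  moreover have "xs n \<in> orbit T x" for n
    by (auto simp: xs_def orbit_def)
  ultimately have "T x0 = x0 \<longleftrightarrow> fwd_orbital_lsc d T x (\<lambda>z. d z (T z)) x0"
    using assms(1) conv by (intro fixed_point_iff_fwd_orbital_lsc) (simp_all add: xs_def)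
  with conv show ?thesis
    unfolding xs_def by blast
qed

end
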